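(* Consider the discrete-time system $x_{k+1}=f(x_k,u_k,w_k)$, $y_k=h(x_k,v_k)$ with $x_k\in\mathbb{X}\subset\mathbb{R}^n$, $u_k\in\mathbb{U}\subseteq\mathbb{R}^m$, $w_k\in\mathbb{R}^q$, $v_k\in\mathbb{V}\subset\mathbb{R}^r$, $y_k\in\mathbb{Y}\subset\mathbb{R}^p$, $f,h$ continuously differentiable, $\mathbb{Z}:=\mathbb{X}\times\mathbb{U}\times\mathbb{R}^q\times\mathbb{V}\times\mathbb{Y}$. Assume $\mathbb{X},\mathbb{V},\mathbb{Y}$ are compact. Assume there is a diffeomorphism $T=(T_\flat,T_\sharp):\mathbb{R}^n\to\mathbb{R}^{n_\flat+n_\sharp}$ and a continuously differentiable $\psi:\mathbb{R}^p\times\mathbb{R}^{n_\sharp}\times\mathbb{R}^r\to\mathbb{R}^{n_\flat}$ such that, with $z=T(x)=(z^\flat,z^\sharp)$, $f_\sharp(z^\sharp,z^\flat,u,w):=T_\sharp(f(T^{-1}(z),u,w))$ and $h_T(z^\sharp,z^\flat,v):=h(T^{-1}(z),v)$, one has $z^\flat=\psi(y,z^\sharp,v)$ whenever $y=h_T(z^\sharp,z^\flat,v)$, and $\partial f_\sharp^i/\partial w\equiv0$ for all $i\in\{1,\dots,n_\sharp\}$. Define the reduced-order system $$z^\sharp_{k+1}=\hat{f}_\sharp(z^\sharp_k,\gamma_k,u_k,v_k):=f_\sharp\big(z^\sharp_k,\psi(\gamma_k,z^\sharp_k,v_k),u_k,w_k\big),\qquad y_k=\hat{h}_T(z^\sharp_k,\gamma_k,v_k):=h_T\big(z^\sharp_k,\psi(\gamma_k,z^\sharp_k,v_k),v_k\big),$$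 with fictitious input $\gamma_k\in\mathbb{R}^p$ (the right-hand side does not depend on $w_k$). Let $\overline{\mathbb{X}}:=T(\mathbb{X})$, $\overline{\mathbb{X}}_\sharp$ its projection onto the $z^\sharp$-coordinates and $\mathbb{Z}_\sharp:=\overline{\mathbb{X}}_\sharp\times\mathbb{Y}\times\mathbb{U}\times\mathbb{V}\times\mathbb{Y}$. If there exist $\beta\in\mathcal{K}_\infty$, $\beta_0\in\mathcal{KL}$ and summable $\mathcal{KL}$-functions $\beta_v,\beta_y,\beta_\gamma$ such that $$\beta(\|z^\sharp_k-\widetilde{z}^\sharp_k\|)\le\sum_{i=1}^k\beta_v(\|v_{k-i}-\widetilde{v}_{k-i}\|,i)+\sum_{i=1}^k\big(\beta_y(\|y_{k-i}-\widetilde{y}_{k-i}\|,i)+\beta_\gamma(\|\gamma_{k-i}-\widetilde{\gamma}_{k-i}\|,i)\big)+\beta_0(\|z^\sharp_0-\widetilde{z}^\sharp_0\|,k)$$ for all $k\ge0$ and any $(\boldsymbol{z}^\sharp,\boldsymbol{\gamma},\boldsymbol{u},\boldsymbol{v},\boldsymbol{y}),(\widetilde{\boldsymbol{z}}^\sharp,\widetilde{\boldsymbol{\gamma}},\boldsymbol{u},\widetilde{\boldsymbol{v}},\widetilde{\boldsymbol{y}})\in\mathbb{Z}_\sharp^\infty$ satisfying the reduced-order system, then the original system is strongly nonlinearly detectable.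
   Context: $\mathcal{K}$, $\mathcal{K}_\infty$, $\mathcal{KL}$ are the usual comparison function classes; a $\mathcal{KL}$-function $\beta$ is summable if there is $\alpha\in\mathcal{K}$ with $\sum_{k\ge0}\beta(r,k)\le\alpha(r)$ for all $r\ge0$. A solution of the original system is a sequence in $\mathbb{Z}^\infty$ satisfying its equations. The original system is strongly nonlinearly detectable if there exist $\alpha\in\mathcal{K}_\infty$, $\alpha_0\in\mathcal{KL}$ and summable $\alpha_v,\alpha_y\in\mathcal{KL}$ such that $\alpha(\|x_k-\widetilde{x}_k\|)\le\alpha_0(\|x_0-\widetilde{x}_0\|,k)+\sum_{i=0}^k(\alpha_v(\|v_{k-i}-\widetilde{v}_{k-i}\|,i)+\alpha_y(\|y_{k-i}-\widetilde{y}_{k-i}\|,i))$ for all $k\ge0$ and all pairs of solutions $(\boldsymbol{x},\boldsymbol{u},\boldsymbol{w},\boldsymbol{v},\boldsymbol{y}),(\widetilde{\boldsymbol{x}},\boldsymbol{u},\widetilde{\boldsymbol{w}},\widetilde{\boldsymbol{v}},\widetilde{\boldsymbol{y}})\in\mathbb{Z}^\infty$. *)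

theory Defs
  imports "HOL-Analysis.Analysis"
begin

definition classK :: "(real \<Rightarrow> real) \<Rightarrow> bool" where
  "classK \<alpha> \<longleftrightarrow> continuous_on {0..} \<alpha> \<and> \<alpha> 0 = 0 \<and> strict_mono_on {0..} \<alpha>"

definition classKinf :: "(real \<Rightarrow> real) \<Rightarrow> bool" where
  "classKinf \<alpha> \<longleftrightarrow> classK \<alpha> \<and> filterlim \<alpha> at_top at_top"

definition classKL :: "(real \<Rightarrow> nat \<Rightarrow> real) \<Rightarrow> bool" where
  "classKL \<beta> \<longleftrightarrow> (\<forall>t. classK (\<lambda>r. \<beta> r t)) \<and>
     (\<forall>r\<ge>0. decseq (\<lambda>t. \<beta> r t) \<and> (\<lambda>t. \<beta> r t) \<longlonglongrightarrow> 0)"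

definition summable_KL :: "(real \<Rightarrow> nat \<Rightarrow> real) \<Rightarrow> bool" where
  "summable_KL \<beta> \<longleftrightarrow> classKL \<beta> \<and>
     (\<exists>\<alpha>. classK \<alpha> \<and> (\<forall>r\<ge>0. \<forall>N. (\<Sum>k<N. \<beta> r k) \<le> \<alpha> r))"

definition C1_map :: "('a::euclidean_space \<Rightarrow> 'b::euclidean_space) \<Rightarrow> bool" where
  "C1_map g \<longleftrightarrow> (\<exists>D. (\<forall>x. (g has_derivative blinfun_apply (D x)) (at x)) \<and> continuous_on UNIV D)"

definition diffeo :: "('a::euclidean_space \<Rightarrow> 'b::euclidean_space) \<Rightarrow> bool" where
  "diffeo T \<longleftrightarrow> bij T \<and> C1_map T \<and> C1_map (inv T)"

definition orig_sol ::
  "('x \<Rightarrow> 'u \<Rightarrow> 'w \<Rightarrow> 'x) \<Rightarrow> ('x \<Rightarrow> 'v \<Rightarrow> 'y) \<Rightarrow> 'x set \<Rightarrow> 'u set \<Rightarrow> 'v set \<Rightarrow> 'y set \<Rightarrow>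
   (nat \<Rightarrow> 'x) \<Rightarrow> (nat \<Rightarrow> 'u) \<Rightarrow> (nat \<Rightarrow> 'w) \<Rightarrow> (nat \<Rightarrow> 'v) \<Rightarrow> (nat \<Rightarrow> 'y) \<Rightarrow> bool" where
  "orig_sol f h X U V Y x u w v y \<longleftrightarrow>
     (\<forall>k. x k \<in> X \<and> u k \<in> U \<and> v k \<in> V \<and> y k \<in> Y \<and>
          x (Suc k) = f (x k) (u k) (w k) \<and> y k = h (x k) (v k))"

definition strongly_nl_detectable ::
  "('x::real_normed_vector \<Rightarrow> 'u \<Rightarrow> 'w \<Rightarrow> 'x) \<Rightarrow> ('x \<Rightarrow> 'v::real_normed_vector \<Rightarrow> 'y::real_normed_vector)
   \<Rightarrow> 'x set \<Rightarrow> 'u set \<Rightarrow> 'v set \<Rightarrow> 'y set \<Rightarrow> bool" where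
  "strongly_nl_detectable f h X U V Y \<longleftrightarrow>
     (\<exists>\<alpha> \<alpha>0 \<alpha>v \<alpha>y. classKinf \<alpha> \<and> classKL \<alpha>0 \<and> summable_KL \<alpha>v \<and> summable_KL \<alpha>y \<and>
       (\<forall>x u w v y x' w' v' y' k.
          orig_sol f h X U V Y x u w v y \<longrightarrow> orig_sol f h X U V Y x' u w' v' y' \<longrightarrow>
          \<alpha> (norm (x k - x' k)) \<le> \<alpha>0 (norm (x 0 - x' 0)) k +
            (\<Sum>i\<le>k. \<alpha>v (norm (v (k - i) - v' (k - i))) i + \<alpha>y (norm (y (k - i) - y' (k - i))) i)))"

definition f_sharp ::
  "('x \<Rightarrow> 'zb \<times> 'zs) \<Rightarrow> ('x \<Rightarrow> 'u \<Rightarrow> 'w \<Rightarrow> 'x) \<Rightarrow> 'zs \<Rightarrow> 'zb \<Rightarrow> 'u \<Rightarrow> 'w \<Rightarrow> 'zs" where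
  "f_sharp T f zs zb u w = snd (T (f (inv T (zb, zs)) u w))"

definition h_T :: "('x \<Rightarrow> 'zb \<times> 'zs) \<Rightarrow> ('x \<Rightarrow> 'v \<Rightarrow> 'y) \<Rightarrow> 'zs \<Rightarrow> 'zb \<Rightarrow> 'v \<Rightarrow> 'y" where
  "h_T T h zs zb v = h (inv T (zb, zs)) v"

text \<open>The disturbance w k is a placeholder on which the right-hand side does not depend.\<close>
definition red_sol ::
  "('x \<Rightarrow> 'zb \<times> 'zs) \<Rightarrow> ('x \<Rightarrow> 'u \<Rightarrow> 'w \<Rightarrow> 'x) \<Rightarrow> ('x \<Rightarrow> 'v \<Rightarrow> 'y) \<Rightarrow> ('y \<Rightarrow> 'zs \<Rightarrow> 'v \<Rightarrow> 'zb) \<Rightarrow>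
   'x set \<Rightarrow> 'u set \<Rightarrow> 'v set \<Rightarrow> 'y set \<Rightarrow>
   (nat \<Rightarrow> 'zs) \<Rightarrow> (nat \<Rightarrow> 'y) \<Rightarrow> (nat \<Rightarrow> 'u) \<Rightarrow> (nat \<Rightarrow> 'v) \<Rightarrow> (nat \<Rightarrow> 'y) \<Rightarrow> bool" where
  "red_sol T f h \<psi> X U V Y zs \<gamma> u v y \<longleftrightarrow>
     (\<forall>k. zs k \<in> snd ` (T ` X) \<and> \<gamma> k \<in> Y \<and> u k \<in> U \<and> v k \<in> V \<and> y k \<in> Y \<and>
          (\<exists>w. zs (Suc k) = f_sharp T f (zs k) (\<psi> (\<gamma> k) (zs k) (v k)) (u k) w) \<and>
          y k = h_T T h (zs k) (\<psi> (\<gamma> k) (zs k) (v k)) (v k))"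

end

theory Submission
  imports Defs
begin

text \<open>Along a solution of the original system, \<open>T x\<^sub>k = (\<psi>(y\<^sub>k, z\<^sup>\<sharp>\<^sub>k, v\<^sub>k), z\<^sup>\<sharp>\<^sub>k)\<close>, so
  \<open>z\<^sup>\<sharp> = T\<^sub>\<sharp> \<circ> x\<close> solves the reduced system with fictitious input \<open>\<gamma> = y\<close>; the disturbance
  \<open>w\<^sub>k\<close> itself witnesses the reduced transition. On the compact sets involved \<open>T\<close>,
  \<open>T\<^sup>-\<^sup>1\<close> and \<open>\<psi>\<close> are Lipschitz, hence
  \<open>\<parallel>x\<^sub>k - x'\<^sub>k\<parallel> \<le> M (\<parallel>y\<^sub>k - y'\<^sub>k\<parallel> + \<parallel>z\<^sup>\<sharp>\<^sub>k - z'\<^sup>\<sharp>\<^sub>k\<parallel> + \<parallel>v\<^sub>k - v'\<^sub>k\<parallel>)\<close>. Applying \<open>\<beta>(\<cdot>/3M)\<close> splits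
  this into three \<open>\<beta>\<close>-terms: the \<open>z\<^sup>\<sharp>\<close>-term is bounded by reduced-order detectability, and
  the two current-time terms are absorbed into the summable weights \<open>\<beta>(r)(1/2)\<^sup>t\<close>.\<close>

lemma classK_nonneg: "classK \<alpha> \<Longrightarrow> 0 \<le> r \<Longrightarrow> 0 \<le> \<alpha> r"
  unfolding classK_def by (metis atLeast_iff order.refl order_le_less strict_mono_onD)

lemma classK_mono: "classK \<alpha> \<Longrightarrow> 0 \<le> r \<Longrightarrow> r \<le> s \<Longrightarrow> \<alpha> r \<le> \<alpha> s"
  unfolding classK_def by (metis atLeast_iff order.trans order_le_less strict_mono_onD)

lemma classK_add: "classK \<alpha> \<Longrightarrow> classK \<beta> \<Longrightarrow> classK (\<lambda>r. \<alpha> r + \<beta> r)"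
  unfolding classK_def strict_mono_on_def by (auto intro!: continuous_on_add add_strict_mono)

lemma classK_mult_const: "classK \<alpha> \<Longrightarrow> 0 < c \<Longrightarrow> classK (\<lambda>r. \<alpha> r * c)"
  unfolding classK_def strict_mono_on_def by (auto intro!: continuous_on_mult continuous_on_const)

lemma classK_rescale:
  assumes "classK \<alpha>" "0 < c"
  shows "classK (\<lambda>r. \<alpha> (c * r))"
proof -
  have \<alpha>: "continuous_on {0..} \<alpha>" "\<alpha> 0 = 0" "strict_mono_on {0..} \<alpha>"
    using assms(1) unfolding classK_def by auto
  have "continuous_on {0..} (\<lambda>r. \<alpha> (c * r))"
    using assms(2)
    by (intro continuous_on_compose2[OF \<alpha>(1)] continuous_intros) (auto simp: less_imp_le)
  moreover have "strict_mono_on {0..} (\<lambda>r. \<alpha> (c * r))"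
    using assms(2) by (auto intro!: strict_mono_onI strict_mono_onD[OF \<alpha>(3)])
  ultimately show ?thesis
    using \<alpha>(2) unfolding classK_def by simp
qed

lemma classKinf_rescale:
  assumes "classKinf \<alpha>" "0 < c"
  shows "classKinf (\<lambda>r. \<alpha> (c * r))"
proof -
  have "filterlim (\<lambda>r. c * r) at_top at_top"
    using assms(2) by (intro filterlim_tendsto_pos_mult_at_top[OF tendsto_const _ filterlim_ident])
  then show ?thesis
    using assms classK_rescale filterlim_compose unfolding classKinf_def by blast
qed

lemma classKL_rescale: "classKL \<beta> \<Longrightarrow> 0 < c \<Longrightarrow> classKL (\<lambda>r t. \<beta> (c * r) t)"
  unfolding classKL_def by (auto intro: classK_rescale)

lemma classKL_mono:
  assumes "classKL \<beta>" "0 \<le> r" "r \<le> s"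
  shows "\<beta> r t \<le> \<beta> s t"
  using classK_mono[of "\<lambda>r. \<beta> r t", OF _ assms(2,3)] assms(1) unfolding classKL_def by blast

lemma classKL_add: "classKL \<beta>\<^sub>1 \<Longrightarrow> classKL \<beta>\<^sub>2 \<Longrightarrow> classKL (\<lambda>r t. \<beta>\<^sub>1 r t + \<beta>\<^sub>2 r t)"
  unfolding classKL_def by (auto intro!: classK_add add_mono tendsto_add_zero simp: decseq_def)

lemma summable_KL_add:
  assumes "summable_KL \<beta>\<^sub>1" "summable_KL \<beta>\<^sub>2"
  shows "summable_KL (\<lambda>r t. \<beta>\<^sub>1 r t + \<beta>\<^sub>2 r t)"
proof -
  obtain \<alpha>\<^sub>1 \<alpha>\<^sub>2 where "classK \<alpha>\<^sub>1" "classK \<alpha>\<^sub>2"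
    and "\<And>r N. 0 \<le> r \<Longrightarrow> (\<Sum>k<N. \<beta>\<^sub>1 r k) \<le> \<alpha>\<^sub>1 r"
    and "\<And>r N. 0 \<le> r \<Longrightarrow> (\<Sum>k<N. \<beta>\<^sub>2 r k) \<le> \<alpha>\<^sub>2 r"
    using assms unfolding summable_KL_def by metis
  then have "classK (\<lambda>r. \<alpha>\<^sub>1 r + \<alpha>\<^sub>2 r) \<and>
      (\<forall>r\<ge>0. \<forall>N. (\<Sum>k<N. \<beta>\<^sub>1 r k + \<beta>\<^sub>2 r k) \<le> \<alpha>\<^sub>1 r + \<alpha>\<^sub>2 r)"
    by (simp add: sum.distrib add_mono classK_add)
  moreover have "classKL (\<lambda>r t. \<beta>\<^sub>1 r t + \<beta>\<^sub>2 r t)"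
    using assms unfolding summable_KL_def by (blast intro: classKL_add)
  ultimately show ?thesis
    unfolding summable_KL_def by blast
qed

lemma summable_KL_geometric:
  assumes "classK \<alpha>"
  shows "summable_KL (\<lambda>r t. \<alpha> r * (1/2) ^ t)"
  unfolding summable_KL_def classKL_def
proof (intro conjI allI impI exI)
  show "classK (\<lambda>r. \<alpha> r * (1/2) ^ t)" for t
    using assms by (rule classK_mult_const) simp
  show "classK (\<lambda>r. \<alpha> r * 2)"
    using assms by (rule classK_mult_const) simp
  fix r :: real
  assume "0 \<le> r"
  then have "0 \<le> \<alpha> r"
    using assms classK_nonneg by blast
  then show "decseq (\<lambda>t. \<alpha> r * (1/2) ^ t)"
    unfolding decseq_def by (auto intro!: mult_left_mono power_decreasing)
  show "(\<lambda>t. \<alpha> r * (1/2) ^ t) \<longlonglongrightarrow> 0"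
    by (intro tendsto_mult_right_zero LIMSEQ_power_zero) simp
  have "(\<Sum>k<N. (1/2::real) ^ k) \<le> 2" for N
    by (simp add: sum_gp_strict)
  then show "(\<Sum>k<N. \<alpha> r * (1/2) ^ k) \<le> \<alpha> r * 2" for N
    using \<open>0 \<le> \<alpha> r\<close> by (simp add: sum_distrib_left[symmetric] mult_left_mono)
qed

lemma classK_third_of_sum_le:
  assumes "classK \<alpha>" "0 \<le> a" "0 \<le> b" "0 \<le> c" "0 \<le> s" "s \<le> a + b + c"
  shows "\<alpha> (s / 3) \<le> \<alpha> a + \<alpha> b + \<alpha> c"
proof -
  have nonneg: "0 \<le> \<alpha> a" "0 \<le> \<alpha> b" "0 \<le> \<alpha> c"
    using assms(1-4) classK_nonneg by blast+
  have "s / 3 \<le> a \<or> s / 3 \<le> b \<or> s / 3 \<le> c"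
    using assms(6) by linarith
  then have "\<alpha> (s / 3) \<le> \<alpha> a \<or> \<alpha> (s / 3) \<le> \<alpha> b \<or> \<alpha> (s / 3) \<le> \<alpha> c"
    using classK_mono[OF assms(1)] assms(5) by auto
  then show ?thesis
    using nonneg by linarith
qed

lemma head_plus_tail_le_sum_atMost:
  fixes F G :: "nat \<Rightarrow> real"
  assumes "\<And>i. 0 \<le> F i" "\<And>i. 0 \<le> G i"
  shows "G 0 + (\<Sum>i=1..k. F i) \<le> (\<Sum>i\<le>k. F i + G i)"
proof -
  have "(\<Sum>i=1..k. F i) \<le> (\<Sum>i\<le>k. F i)"
    using assms(1) by (intro sum_mono2) auto
  moreover have "G 0 \<le> (\<Sum>i\<le>k. G i)"
    using assms(2) by (intro member_le_sum) auto
  ultimately show ?thesis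
    by (simp add: sum.distrib)
qed

lemma summable_KL_nonneg: "summable_KL \<beta> \<Longrightarrow> 0 \<le> r \<Longrightarrow> 0 \<le> \<beta> r t"
  unfolding summable_KL_def classKL_def using classK_nonneg by blast

lemma current_terms_le_geometric_weights:
  fixes a c :: "nat \<Rightarrow> real"
  assumes "classK \<beta>" "summable_KL \<beta>\<^sub>v" "summable_KL \<beta>\<^sub>y" "\<And>i. 0 \<le> a i" "\<And>i. 0 \<le> c i"
  shows "\<beta> (c k) + \<beta> (a k) + (\<Sum>i=1..k. \<beta>\<^sub>v (c (k - i)) i + \<beta>\<^sub>y (a (k - i)) i)
    \<le> (\<Sum>i\<le>k. (\<beta>\<^sub>v (c (k - i)) i + \<beta> (c (k - i)) * (1/2) ^ i) +
               (\<beta>\<^sub>y (a (k - i)) i + \<beta> (a (k - i)) * (1/2) ^ i))"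
proof -
  have "\<beta> (c k) + \<beta> (a k) + (\<Sum>i=1..k. \<beta>\<^sub>v (c (k - i)) i + \<beta>\<^sub>y (a (k - i)) i)
      \<le> (\<Sum>i\<le>k. (\<beta>\<^sub>v (c (k - i)) i + \<beta>\<^sub>y (a (k - i)) i) + (\<beta> (c (k - i)) + \<beta> (a (k - i))) * (1/2) ^ i)"
    using head_plus_tail_le_sum_atMost[of "\<lambda>i. \<beta>\<^sub>v (c (k - i)) i + \<beta>\<^sub>y (a (k - i)) i"
        "\<lambda>i. (\<beta> (c (k - i)) + \<beta> (a (k - i))) * (1/2) ^ i" k] assms
    by (simp add: classK_nonneg summable_KL_nonneg)
  then show ?thesis
    by (simp add: algebra_simps)
qed

lemma C1_map_lipschitz_on_compact:
  fixes g :: "'a::euclidean_space \<Rightarrow> 'b::euclidean_space"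
  assumes "C1_map g" "compact S"
  obtains L where "L > 0" "L-lipschitz_on S g"
proof -
  obtain D where D: "\<And>x. (g has_derivative blinfun_apply (D x)) (at x)" "continuous_on UNIV D"
    using assms(1) unfolding C1_map_def by blast
  have "compact (D ` (convex hull S))"
    using assms(2) by (intro compact_continuous_image continuous_on_subset[OF D(2)] compact_convex_hull) auto
  then obtain B where "B > 0" and B: "\<And>x. x \<in> convex hull S \<Longrightarrow> norm (D x) \<le> B"
    by (auto dest!: compact_imp_bounded simp: bounded_pos)
  have "B-lipschitz_on (convex hull S) g"
  proof (rule bounded_derivative_imp_lipschitz)
    show "(g has_derivative blinfun_apply (D x)) (at x within convex hull S)" for x
      by (rule has_derivative_at_withinI[OF D(1)])
    show "onorm (blinfun_apply (D x)) \<le> B" if "x \<in> convex hull S" for x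
      using B[OF that] by (simp add: norm_blinfun.rep_eq)
  qed (use \<open>B > 0\<close> in auto)
  then show thesis
    by (rule that[OF \<open>B > 0\<close> lipschitz_on_subset[OF _ hull_subset]])
qed

lemma lipschitz_on_snd:
  assumes "L-lipschitz_on S f"
  shows "L-lipschitz_on S (\<lambda>x. snd (f x))"
proof (rule lipschitz_onI)
  fix a b
  assume "a \<in> S" "b \<in> S"
  have "dist (snd (f a)) (snd (f b)) \<le> dist (f a) (f b)"
    by (rule dist_snd_le)
  also have "\<dots> \<le> L * dist a b"
    using assms \<open>a \<in> S\<close> \<open>b \<in> S\<close> by (rule lipschitz_onD)
  finally show "dist (snd (f a)) (snd (f b)) \<le> L * dist a b" .
qed (rule lipschitz_on_nonneg[OF assms])

lemma reconstruction_norm_diff_le: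
  fixes T :: "'x::real_normed_vector \<Rightarrow> 'zb::real_normed_vector \<times> 'zs::real_normed_vector"
    and \<psi> :: "'y::real_normed_vector \<Rightarrow> 'zs \<Rightarrow> 'v::real_normed_vector \<Rightarrow> 'zb"
  assumes "inj T" and L: "L-lipschitz_on (T ` X) (inv T)"
    and L\<^sub>\<psi>: "L\<^sub>\<psi>-lipschitz_on (Y \<times> snd ` T ` X \<times> V) (\<lambda>(y, zs, v). \<psi> y zs v)"
    and mem: "x \<in> X" "x' \<in> X" "y \<in> Y" "y' \<in> Y" "v \<in> V" "v' \<in> V"
    and Tx: "T x = (\<psi> y (snd (T x)) v, snd (T x))" and Tx': "T x' = (\<psi> y' (snd (T x')) v', snd (T x'))"
  shows "norm (x - x') \<le> L * (L\<^sub>\<psi> + 1) * (norm (y - y') + norm (snd (T x) - snd (T x')) + norm (v - v'))"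
proof -
  define d where "d = norm (y - y') + norm (snd (T x) - snd (T x')) + norm (v - v')"
  have "norm (\<psi> y (snd (T x)) v - \<psi> y' (snd (T x')) v')
      \<le> L\<^sub>\<psi> * norm ((y, snd (T x), v) - (y', snd (T x'), v'))"
    using lipschitz_on_normD[OF L\<^sub>\<psi>, of "(y, snd (T x), v)" "(y', snd (T x'), v')"] mem by auto
  also have "\<dots> \<le> L\<^sub>\<psi> * d"
    unfolding d_def using lipschitz_on_nonneg[OF L\<^sub>\<psi>]
    by (intro mult_left_mono) (simp_all add: order_trans[OF norm_Pair_le] norm_Pair_le add_left_mono)
  finally have \<psi>_diff: "norm (\<psi> y (snd (T x)) v - \<psi> y' (snd (T x')) v') \<le> L\<^sub>\<psi> * d" .
  have "fst (T x) = \<psi> y (snd (T x)) v" "fst (T x') = \<psi> y' (snd (T x')) v'"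
    using Tx Tx' by (metis fst_conv)+
  then have "T x - T x' = (\<psi> y (snd (T x)) v - \<psi> y' (snd (T x')) v', snd (T x) - snd (T x'))"
    by (simp add: prod_eq_iff)
  then have "norm (T x - T x') \<le> norm (\<psi> y (snd (T x)) v - \<psi> y' (snd (T x')) v') + norm (snd (T x) - snd (T x'))"
    by (simp add: norm_Pair_le)
  also have "\<dots> \<le> L\<^sub>\<psi> * d + d"
    using \<psi>_diff norm_ge_zero[of "y - y'"] norm_ge_zero[of "v - v'"] unfolding d_def by linarith
  finally have T_diff: "norm (T x - T x') \<le> (L\<^sub>\<psi> + 1) * d"
    by (simp add: distrib_right)
  have "norm (x - x') = norm (inv T (T x) - inv T (T x'))"
    using \<open>inj T\<close> by simp
  also have "\<dots> \<le> L * norm (T x - T x')"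
    using mem by (intro lipschitz_on_normD[OF L]) auto
  also have "\<dots> \<le> L * ((L\<^sub>\<psi> + 1) * d)"
    using T_diff lipschitz_on_nonneg[OF L] by (simp add: mult_left_mono)
  finally show ?thesis
    unfolding d_def by (simp add: mult.assoc)
qed

lemma state_reconstruction_lipschitz:
  fixes T :: "'x::euclidean_space \<Rightarrow> 'zb::euclidean_space \<times> 'zs::euclidean_space"
    and \<psi> :: "'y::euclidean_space \<Rightarrow> 'zs \<Rightarrow> 'v::euclidean_space \<Rightarrow> 'zb"
  assumes "diffeo T" "compact X" "compact Y" "compact V" "C1_map (\<lambda>(y, zs, v). \<psi> y zs v)"
  obtains M where "M > 0"
    "\<And>x x' y y' v v'. x \<in> X \<Longrightarrow> x' \<in> X \<Longrightarrow> y \<in> Y \<Longrightarrow> y' \<in> Y \<Longrightarrow> v \<in> V \<Longrightarrow> v' \<in> V \<Longrightarrow>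
       T x = (\<psi> y (snd (T x)) v, snd (T x)) \<Longrightarrow> T x' = (\<psi> y' (snd (T x')) v', snd (T x')) \<Longrightarrow>
       norm (x - x') \<le> M * (norm (y - y') + norm (snd (T x) - snd (T x')) + norm (v - v'))"
proof -
  have "C1_map T" "C1_map (inv T)" "inj T"
    using assms(1) unfolding diffeo_def bij_def by auto
  obtain L\<^sub>T where "L\<^sub>T-lipschitz_on X T"
    using C1_map_lipschitz_on_compact[OF \<open>C1_map T\<close> assms(2)] by blast
  then have "compact (T ` X)"
    using assms(2) by (intro compact_continuous_image lipschitz_on_continuous_on)
  then obtain L where "L > 0" "L-lipschitz_on (T ` X) (inv T)"
    using C1_map_lipschitz_on_compact[OF \<open>C1_map (inv T)\<close>] by blast
  have "compact (snd ` T ` X)"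
    by (rule compact_continuous_image[OF continuous_on_snd[OF continuous_on_id] \<open>compact (T ` X)\<close>])
  then have "compact (Y \<times> snd ` T ` X \<times> V)"
    using assms(3,4) by (intro compact_Times)
  then obtain L\<^sub>\<psi> where "L\<^sub>\<psi> > 0" "L\<^sub>\<psi>-lipschitz_on (Y \<times> snd ` T ` X \<times> V) (\<lambda>(y, zs, v). \<psi> y zs v)"
    using C1_map_lipschitz_on_compact[OF assms(5)] by blast
  with \<open>L > 0\<close> \<open>L-lipschitz_on (T ` X) (inv T)\<close> \<open>inj T\<close> show thesis
    by (intro that[of "L * (L\<^sub>\<psi> + 1)"] reconstruction_norm_diff_le) simp_all
qed

lemma orig_sol_T_eq:
  assumes "orig_sol f h X U V Y x u w v y" "inj T"
    and "\<And>zs zb v y. y = h_T T h zs zb v \<Longrightarrow> zb = \<psi> y zs v"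
  shows "T (x k) = (\<psi> (y k) (snd (T (x k))) (v k), snd (T (x k)))"
proof -
  have "y k = h_T T h (snd (T (x k))) (fst (T (x k))) (v k)"
    using assms(1,2) unfolding orig_sol_def h_T_def by simp
  then have "fst (T (x k)) = \<psi> (y k) (snd (T (x k))) (v k)"
    by (rule assms(3))
  then show ?thesis
    by (metis prod.collapse)
qed

lemma orig_sol_imp_red_sol:
  assumes sol: "orig_sol f h X U V Y x u w v y" and "inj T"
    and psi_inv: "\<And>zs zb v y. y = h_T T h zs zb v \<Longrightarrow> zb = \<psi> y zs v"
  shows "red_sol T f h \<psi> X U V Y (\<lambda>k. snd (T (x k))) y u v y"
  unfolding red_sol_def
proof (intro allI conjI)
  fix k
  have step: "x k \<in> X" "u k \<in> U" "v k \<in> V" "y k \<in> Y"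
      "x (Suc k) = f (x k) (u k) (w k)" "y k = h (x k) (v k)"
    using sol unfolding orig_sol_def by blast+
  have inv_T: "inv T (\<psi> (y k) (snd (T (x k))) (v k), snd (T (x k))) = x k"
    using inv_f_f[OF \<open>inj T\<close>, of "x k"] by (subst (asm) orig_sol_T_eq[OF sol \<open>inj T\<close> psi_inv])
  show "\<exists>w. snd (T (x (Suc k))) = f_sharp T f (snd (T (x k))) (\<psi> (y k) (snd (T (x k))) (v k)) (u k) w"
    using step(5) by (intro exI[of _ "w k"]) (simp add: f_sharp_def inv_T)
  show "y k = h_T T h (snd (T (x k))) (\<psi> (y k) (snd (T (x k))) (v k)) (v k)"
    unfolding h_T_def inv_T by (rule step(6))
  show "snd (T (x k)) \<in> snd ` T ` X"
    using step(1) by blast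
  show "y k \<in> Y" "u k \<in> U" "v k \<in> V" "y k \<in> Y"
    by (fact step)+
qed

lemma strongly_nl_detectableI_partial_state:
  fixes P :: "'x::real_normed_vector \<Rightarrow> 'z::real_normed_vector"
  assumes "classKinf \<beta>" "classKL \<beta>\<^sub>0" "summable_KL \<beta>\<^sub>v" "summable_KL \<beta>\<^sub>y"
    and "L > 0" "L-lipschitz_on X P" "M > 0"
    and reconstruct: "\<And>x u w v y x' w' v' y' k.
      orig_sol f h X U V Y x u w v y \<Longrightarrow> orig_sol f h X U V Y x' u w' v' y' \<Longrightarrow>
      norm (x k - x' k) \<le> M * (norm (y k - y' k) + norm (P (x k) - P (x' k)) + norm (v k - v' k))"
    and partial_det: "\<And>x u w v y x' w' v' y' k.
      orig_sol f h X U V Y x u w v y \<Longrightarrow> orig_sol f h X U V Y x' u w' v' y' \<Longrightarrow>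
      \<beta> (norm (P (x k) - P (x' k))) \<le>
        (\<Sum>i=1..k. \<beta>\<^sub>v (norm (v (k - i) - v' (k - i))) i + \<beta>\<^sub>y (norm (y (k - i) - y' (k - i))) i) +
        \<beta>\<^sub>0 (norm (P (x 0) - P (x' 0))) k"
  shows "strongly_nl_detectable f h X U V Y"
proof -
  have "classK \<beta>"
    using assms(1) unfolding classKinf_def by blast
  define \<alpha> where "\<alpha> s = \<beta> (1 / (3 * M) * s)" for s
  define \<alpha>\<^sub>0 where "\<alpha>\<^sub>0 r t = \<beta>\<^sub>0 (L * r) t" for r t
  define \<alpha>\<^sub>v where "\<alpha>\<^sub>v r t = \<beta>\<^sub>v r t + \<beta> r * (1/2) ^ t" for r t
  define \<alpha>\<^sub>y where "\<alpha>\<^sub>y r t = \<beta>\<^sub>y r t + \<beta> r * (1/2) ^ t" for r t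
  show ?thesis
    unfolding strongly_nl_detectable_def
  proof (rule exI[of _ \<alpha>], rule exI[of _ \<alpha>\<^sub>0], rule exI[of _ \<alpha>\<^sub>v], rule exI[of _ \<alpha>\<^sub>y],
      intro conjI allI impI)
    show "classKinf \<alpha>"
      unfolding \<alpha>_def using classKinf_rescale[OF assms(1), of "1 / (3 * M)"] \<open>M > 0\<close> by simp
    show "classKL \<alpha>\<^sub>0"
      unfolding \<alpha>\<^sub>0_def[abs_def] using assms(2,5) by (rule classKL_rescale)
    show "summable_KL \<alpha>\<^sub>v" "summable_KL \<alpha>\<^sub>y"
      unfolding \<alpha>\<^sub>v_def[abs_def] \<alpha>\<^sub>y_def[abs_def] using assms(3,4) summable_KL_geometric[OF \<open>classK \<beta>\<close>]
      by (auto intro: summable_KL_add)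
    fix x u w v y x' w' v' y' k
    assume sol: "orig_sol f h X U V Y x u w v y" and sol': "orig_sol f h X U V Y x' u w' v' y'"
    have "x 0 \<in> X" "x' 0 \<in> X"
      using sol sol' unfolding orig_sol_def by blast+
    then have P_init: "norm (P (x 0) - P (x' 0)) \<le> L * norm (x 0 - x' 0)"
      using assms(6) by (rule lipschitz_on_normD[rotated])
    define a where "a i = norm (y i - y' i)" for i
    define c where "c i = norm (v i - v' i)" for i
    define b where "b = norm (P (x k) - P (x' k))"
    have "norm (x k - x' k) / M \<le> a k + b + c k"
      using reconstruct[OF sol sol'] \<open>M > 0\<close> unfolding a_def b_def c_def by (simp add: divide_le_eq mult.commute)
    then have "\<alpha> (norm (x k - x' k)) \<le> \<beta> (a k) + \<beta> b + \<beta> (c k)"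
      using classK_third_of_sum_le[OF \<open>classK \<beta>\<close>, of "a k" b "c k" "norm (x k - x' k) / M"] \<open>M > 0\<close>
      unfolding \<alpha>_def a_def b_def c_def by (simp add: mult.commute)
    moreover have "\<beta> b \<le> (\<Sum>i=1..k. \<beta>\<^sub>v (c (k - i)) i + \<beta>\<^sub>y (a (k - i)) i) + \<beta>\<^sub>0 (norm (P (x 0) - P (x' 0))) k"
      using partial_det[OF sol sol'] unfolding a_def b_def c_def .
    moreover have "\<beta>\<^sub>0 (norm (P (x 0) - P (x' 0))) k \<le> \<alpha>\<^sub>0 (norm (x 0 - x' 0)) k"
      unfolding \<alpha>\<^sub>0_def by (rule classKL_mono[OF assms(2) norm_ge_zero P_init])
    moreover have "\<beta> (c k) + \<beta> (a k) + (\<Sum>i=1..k. \<beta>\<^sub>v (c (k - i)) i + \<beta>\<^sub>y (a (k - i)) i)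
        \<le> (\<Sum>i\<le>k. \<alpha>\<^sub>v (norm (v (k - i) - v' (k - i))) i + \<alpha>\<^sub>y (norm (y (k - i) - y' (k - i))) i)"
      using current_terms_le_geometric_weights[OF \<open>classK \<beta>\<close> assms(3,4), of a c k]
      unfolding \<alpha>\<^sub>v_def \<alpha>\<^sub>y_def a_def c_def by simp
    ultimately show "\<alpha> (norm (x k - x' k)) \<le> \<alpha>\<^sub>0 (norm (x 0 - x' 0)) k +
        (\<Sum>i\<le>k. \<alpha>\<^sub>v (norm (v (k - i) - v' (k - i))) i + \<alpha>\<^sub>y (norm (y (k - i) - y' (k - i))) i)"
      by linarith
  qed
qed

theorem lemma3:
  fixes f :: "'x::euclidean_space \<Rightarrow> 'u::euclidean_space \<Rightarrow> 'w::euclidean_space \<Rightarrow> 'x"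
    and h :: "'x \<Rightarrow> 'v::euclidean_space \<Rightarrow> 'y::euclidean_space"
    and X :: "'x set" and U :: "'u set" and V :: "'v set" and Y :: "'y set"
    and T :: "'x \<Rightarrow> 'zb::euclidean_space \<times> 'zs::euclidean_space"
    and \<psi> :: "'y \<Rightarrow> 'zs \<Rightarrow> 'v \<Rightarrow> 'zb"
  assumes f_C1: "C1_map (\<lambda>(x, u, w). f x u w)"
    and h_C1: "C1_map (\<lambda>(x, v). h x v)"
    and X_compact: "compact X" and V_compact: "compact V" and Y_compact: "compact Y"
    and T_diffeo: "diffeo T"
    and psi_C1: "C1_map (\<lambda>(y, zs, v). \<psi> y zs v)"
    and psi_inv: "\<And>zs zb v y. y = h_T T h zs zb v \<Longrightarrow> zb = \<psi> y zs v"
    and f_sharp_w: "\<And>zs zb u w. ((\<lambda>w'. f_sharp T f zs zb u w') has_derivative (\<lambda>_. 0)) (at w)"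
    and reduced_det: "\<exists>\<beta> \<beta>0 \<beta>v \<beta>y \<beta>\<gamma>. classKinf \<beta> \<and> classKL \<beta>0 \<and>
        summable_KL \<beta>v \<and> summable_KL \<beta>y \<and> summable_KL \<beta>\<gamma> \<and>
        (\<forall>zs \<gamma> u v y zs' \<gamma>' v' y' k.
           red_sol T f h \<psi> X U V Y zs \<gamma> u v y \<longrightarrow> red_sol T f h \<psi> X U V Y zs' \<gamma>' u v' y' \<longrightarrow>
           \<beta> (norm (zs k - zs' k)) \<le>
             (\<Sum>i=1..k. \<beta>v (norm (v (k - i) - v' (k - i))) i) +
             (\<Sum>i=1..k. \<beta>y (norm (y (k - i) - y' (k - i))) i + \<beta>\<gamma> (norm (\<gamma> (k - i) - \<gamma>' (k - i))) i) +
             \<beta>0 (norm (zs 0 - zs' 0)) k)"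
  shows "strongly_nl_detectable f h X U V Y"
proof -
  obtain \<beta> \<beta>\<^sub>0 \<beta>\<^sub>v \<beta>\<^sub>y \<beta>\<^sub>\<gamma> where \<beta>: "classKinf \<beta>" "classKL \<beta>\<^sub>0" "summable_KL \<beta>\<^sub>v" "summable_KL \<beta>\<^sub>y"
      "summable_KL \<beta>\<^sub>\<gamma>"
    and reduced: "\<And>zs \<gamma> u v y zs' \<gamma>' v' y' k.
      red_sol T f h \<psi> X U V Y zs \<gamma> u v y \<Longrightarrow> red_sol T f h \<psi> X U V Y zs' \<gamma>' u v' y' \<Longrightarrow>
      \<beta> (norm (zs k - zs' k)) \<le>
        (\<Sum>i=1..k. \<beta>\<^sub>v (norm (v (k - i) - v' (k - i))) i) +
        (\<Sum>i=1..k. \<beta>\<^sub>y (norm (y (k - i) - y' (k - i))) i + \<beta>\<^sub>\<gamma> (norm (\<gamma> (k - i) - \<gamma>' (k - i))) i) +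
        \<beta>\<^sub>0 (norm (zs 0 - zs' 0)) k"
    using reduced_det by blast
  have "inj T" "C1_map T"
    using T_diffeo unfolding diffeo_def bij_def by auto
  obtain L\<^sub>T where "L\<^sub>T > 0" "L\<^sub>T-lipschitz_on X T"
    using C1_map_lipschitz_on_compact[OF \<open>C1_map T\<close> X_compact] by blast
  obtain M where "M > 0" and M: "\<And>x x' y y' v v'. x \<in> X \<Longrightarrow> x' \<in> X \<Longrightarrow> y \<in> Y \<Longrightarrow> y' \<in> Y \<Longrightarrow>
      v \<in> V \<Longrightarrow> v' \<in> V \<Longrightarrow> T x = (\<psi> y (snd (T x)) v, snd (T x)) \<Longrightarrow>
      T x' = (\<psi> y' (snd (T x')) v', snd (T x')) \<Longrightarrow>
      norm (x - x') \<le> M * (norm (y - y') + norm (snd (T x) - snd (T x')) + norm (v - v'))"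
    using state_reconstruction_lipschitz[OF T_diffeo X_compact Y_compact V_compact psi_C1] by blast
  show ?thesis
  proof (rule strongly_nl_detectableI_partial_state[where P = "\<lambda>x. snd (T x)" and \<beta>\<^sub>y = "\<lambda>r t. \<beta>\<^sub>y r t + \<beta>\<^sub>\<gamma> r t"])
    fix x u w v y x' w' v' y' k
    assume sol: "orig_sol f h X U V Y x u w v y" and sol': "orig_sol f h X U V Y x' u w' v' y'"
    show "norm (x k - x' k) \<le> M * (norm (y k - y' k) + norm (snd (T (x k)) - snd (T (x' k))) + norm (v k - v' k))"
      using sol sol' unfolding orig_sol_def
      by (intro M orig_sol_T_eq[OF sol \<open>inj T\<close> psi_inv] orig_sol_T_eq[OF sol' \<open>inj T\<close> psi_inv]) blast+
    show "\<beta> (norm (snd (T (x k)) - snd (T (x' k)))) \<le>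
        (\<Sum>i=1..k. \<beta>\<^sub>v (norm (v (k - i) - v' (k - i))) i +
          (\<beta>\<^sub>y (norm (y (k - i) - y' (k - i))) i + \<beta>\<^sub>\<gamma> (norm (y (k - i) - y' (k - i))) i)) +
        \<beta>\<^sub>0 (norm (snd (T (x 0)) - snd (T (x' 0)))) k"
      using reduced[OF orig_sol_imp_red_sol[OF sol \<open>inj T\<close> psi_inv] orig_sol_imp_red_sol[OF sol' \<open>inj T\<close> psi_inv]]
      by (simp add: sum.distrib)
  qed (use \<beta> \<open>M > 0\<close> \<open>L\<^sub>T > 0\<close> lipschitz_on_snd[OF \<open>L\<^sub>T-lipschitz_on X T\<close>] in \<open>auto intro: summable_KL_add\<close>)
qed

end
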